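(* Let $m_1,m_2,m_3\ge 2$ be integers and let $P^{\mathbf{i}}\in\mathbb{R}^3$ be points indexed by multi-indices $\mathbf{i}=(i_1,i_2,i_3)$ with $i_j\in\{1,\dots,m_j\}$. For $k\in\{1,2,3\}$ let $e_k$ be the $k$-th unit multi-index, $I(k)=\{\mathbf{i}: i_j\in\{1,\dots,m_j\}\text{ for }j\ne k,\ i_k\in\{1,\dots,m_k-1\}\}$, $\Delta_k^{\mathbf{i}}=P^{\mathbf{i}+e_k}-P^{\mathbf{i}}$ for $\mathbf{i}\in I(k)$, and $C_k=\mathrm{coni}\{\Delta_k^{\mathbf{i}}:\mathbf{i}\in I(k)\}$. Define $H_1(x)=x_1-x_2-x_3$, $H_2(x)=x_1-x_2+x_3$, $H_3(x)=x_1+x_2-x_3$, $H_4(x)=x_1+x_2+x_3$ and $C_1^0=\{x: H_1(x)>0,H_2(x)>0,H_3(x)>0,H_4(x)>0\}\cup\{0\}$, $C_2^0=\{x: H_1(x)<0,H_2(x)<0,H_3(x)>0,H_4(x)>0\}\cup\{0\}$, $C_3^0=\{x: H_1(x)<0,H_2(x)>0,H_3(x)<0,H_4(x)>0\}\cup\{0\}$. If $\mathrm{conv}\{\Delta_k^{\mathbf{i}}:\mathbf{i}\in I(k)\}\subset C_k^0$ for $k=1,2,3$, then $C_1,C_2,C_3$ are cotransverse.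
   Context: The conical hull of $X\subseteq\mathbb{R}^3$ is $\mathrm{coni}\,X=\{\sum_{i=1}^n\lambda_i x_i: x_i\in X,\ n\in\mathbb{N},\ \lambda_i\ge0\}$ and the convex hull is $\mathrm{conv}\,X=\{\sum_{i=1}^n\lambda_i x_i: x_i\in X,\ n\in\mathbb{N},\ \lambda_i\ge0,\ \sum_i\lambda_i=1\}$; the convex hull of several cones means the convex hull of their union. A subset $X$ is a cone if $x\in X,\lambda\ge0\Rightarrow\lambda x\in X$. Two cones $C,D$ are transverse if $C\cup(-C)$ and $D\cup(-D)$ intersect only in $\{0\}$. Three cones $C_1,C_2,C_3$ are cotransverse if the origin is a vertex of the convex hull of $C_1,C_2,C_3$ and, for every $\{i,j,k\}=\{1,2,3\}$, $C_i$ and the convex hull of $C_j,C_k$ are transverse. *)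

theory Defs
  imports "HOL-Analysis.Analysis"
begin

definition coni :: "'a::real_vector set \<Rightarrow> 'a set" where
  "coni X = {y. \<exists>(n::nat) (x::nat \<Rightarrow> 'a) (l::nat \<Rightarrow> real).
      (\<forall>i<n. x i \<in> X \<and> l i \<ge> 0) \<and> y = (\<Sum>i<n. l i *\<^sub>R x i)}"

definition transverse :: "'a::real_vector set \<Rightarrow> 'a set \<Rightarrow> bool" where
  "transverse C D \<longleftrightarrow> (C \<union> uminus ` C) \<inter> (D \<union> uminus ` D) \<subseteq> {0}"

text \<open>Vertex of a convex set = extreme point.\<close>
definition cotransverse :: "'a::real_vector set \<Rightarrow> 'a set \<Rightarrow> 'a set \<Rightarrow> bool" where
  "cotransverse C1 C2 C3 \<longleftrightarrow>
     0 extreme_point_of (convex hull (C1 \<union> C2 \<union> C3)) \<and>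
     transverse C1 (convex hull (C2 \<union> C3)) \<and>
     transverse C2 (convex hull (C1 \<union> C3)) \<and>
     transverse C3 (convex hull (C1 \<union> C2))"

definition idxset :: "nat^3 \<Rightarrow> 3 \<Rightarrow> (nat^3) set" where
  "idxset m k = {i. \<forall>j. 1 \<le> i$j \<and> (if j = k then i$j \<le> m$j - 1 else i$j \<le> m$j)}"

definition Delta :: "(nat^3 \<Rightarrow> real^3) \<Rightarrow> 3 \<Rightarrow> nat^3 \<Rightarrow> real^3" where
  "Delta P k i = P (i + axis k 1) - P i"

definition Dset :: "nat^3 \<Rightarrow> (nat^3 \<Rightarrow> real^3) \<Rightarrow> 3 \<Rightarrow> (real^3) set" where
  "Dset m P k = Delta P k ` idxset m k"

definition H1 :: "real^3 \<Rightarrow> real" where "H1 x = x$1 - x$2 - x$3"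
definition H2 :: "real^3 \<Rightarrow> real" where "H2 x = x$1 - x$2 + x$3"
definition H3 :: "real^3 \<Rightarrow> real" where "H3 x = x$1 + x$2 - x$3"
definition H4 :: "real^3 \<Rightarrow> real" where "H4 x = x$1 + x$2 + x$3"

definition C0_1 :: "(real^3) set" where
  "C0_1 = {x. H1 x > 0 \<and> H2 x > 0 \<and> H3 x > 0 \<and> H4 x > 0} \<union> {0}"
definition C0_2 :: "(real^3) set" where
  "C0_2 = {x. H1 x < 0 \<and> H2 x < 0 \<and> H3 x > 0 \<and> H4 x > 0} \<union> {0}"
definition C0_3 :: "(real^3) set" where
  "C0_3 = {x. H1 x < 0 \<and> H2 x > 0 \<and> H3 x < 0 \<and> H4 x > 0} \<union> {0}"

end

theory Submission
  imports Defs
begin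

text \<open>Each \<open>C\<^sub>k\<^sup>0\<close> is an open polyhedral cone with the apex added. The hypotheses put
  the generators of \<open>C\<^sub>k\<close> into \<open>C\<^sub>k\<^sup>0\<close>, hence \<open>C\<^sub>k \<subseteq> C\<^sub>k\<^sup>0\<close>. All three cones lie in
  \<open>H\<^sub>4 > 0\<close>, which makes the origin a vertex of their convex hull; and for each \<open>k\<close>
  one functional (\<open>H\<^sub>1\<close>, \<open>H\<^sub>2\<close>, \<open>H\<^sub>3\<close> respectively) has one sign on \<open>C\<^sub>k\<^sup>0\<close> and the
  opposite sign on the other two cones, so together with \<open>H\<^sub>4\<close> it separates
  \<open>\<plusminus>C\<^sub>k\<close> from \<open>\<plusminus>conv(C\<^sub>i \<union> C\<^sub>j)\<close>.\<close>

definition pos_cone :: "('a::real_vector \<Rightarrow> real) set \<Rightarrow> 'a set" where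
  "pos_cone F = {x. \<forall>f\<in>F. 0 < f x} \<union> {0}"

lemma convex_cone_pos_cone:
  assumes "\<And>f. f \<in> F \<Longrightarrow> linear f"
  shows "convex_cone (pos_cone F)"
  unfolding convex_cone_iff
proof (intro conjI ballI allI impI)
  show "0 \<in> pos_cone F"
    by (simp add: pos_cone_def)
next
  fix x y assume x: "x \<in> pos_cone F" and y: "y \<in> pos_cone F"
  show "x + y \<in> pos_cone F"
  proof (cases "x = 0 \<or> y = 0")
    case True
    with x y show ?thesis by auto
  next
    case False
    with x y have "0 < f x + f y" if "f \<in> F" for f
      using that by (simp add: pos_cone_def add_pos_pos)
    then show ?thesis
      using assms by (simp add: pos_cone_def linear_add)
  qed
next
  fix x and c :: real assume "x \<in> pos_cone F" "0 \<le> c"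
  then show "c *\<^sub>R x \<in> pos_cone F"
    using assms by (cases "c = 0") (auto simp: pos_cone_def linear_cmul)
qed

lemma convex_pos_cone: "(\<And>f. f \<in> F \<Longrightarrow> linear f) \<Longrightarrow> convex (pos_cone F)"
  using convex_cone_pos_cone unfolding convex_cone_def by blast

lemma convex_hull_Un_subset_pos_cone:
  assumes "\<And>f. f \<in> F \<Longrightarrow> linear f" "A \<subseteq> pos_cone F" "B \<subseteq> pos_cone F"
  shows "convex hull (A \<union> B) \<subseteq> pos_cone F"
  using assms by (intro hull_minimal convex_pos_cone) auto

lemma zero_in_coni: "0 \<in> coni X"
  unfolding coni_def by (intro CollectI exI[of _ 0]) simp

lemma coni_subset_convex_cone:
  assumes K: "convex_cone K" and "X \<subseteq> K"
  shows "coni X \<subseteq> K"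
proof
  fix y assume "y \<in> coni X"
  then obtain n :: nat and x l
    where gen: "\<forall>i<n. x i \<in> X \<and> 0 \<le> l i" and y: "y = (\<Sum>i<n. l i *\<^sub>R x i)"
    unfolding coni_def by blast
  have "(\<Sum>i<k. l i *\<^sub>R x i) \<in> K" if "k \<le> n" for k
    using that
  proof (induction k)
    case 0
    show ?case using convex_cone_contains_0[OF K] by simp
  next
    case (Suc k)
    then have "x k \<in> K" "0 \<le> l k"
      using gen \<open>X \<subseteq> K\<close> by auto
    then have "l k *\<^sub>R x k \<in> K"
      by (simp add: convex_cone_scaleR[OF K])
    then show ?case
      using Suc by (simp add: convex_cone_add[OF K])
  qed
  then show "y \<in> K"
    using y by simp
qed

lemma extreme_point_zero_pos_cone:
  assumes f: "linear f" and S: "S \<subseteq> pos_cone {f}" "0 \<in> S"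
  shows "0 extreme_point_of S"
  unfolding extreme_point_of_def
proof (intro conjI ballI notI)
  show "0 \<in> S" by fact
next
  fix a b assume "a \<in> S" "b \<in> S" "0 \<in> open_segment a b"
  then have a: "a = 0 \<or> 0 < f a" and b: "b = 0 \<or> 0 < f b"
    using S by (auto simp: pos_cone_def)
  obtain u where "a \<noteq> b" "0 < u" "u < 1" and u: "0 = (1 - u) *\<^sub>R a + u *\<^sub>R b"
    using \<open>0 \<in> open_segment a b\<close> unfolding in_segment(2) by blast
  moreover have "0 = (1 - u) * f a + u * f b"
    using arg_cong[OF u, of f] f by (simp add: linear_0 linear_add linear_cmul)
  moreover have "0 \<le> (1 - u) * f a" "0 \<le> u * f b"
    using a b \<open>0 < u\<close> \<open>u < 1\<close> f by (auto simp: linear_0)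
  ultimately have "(1 - u) * f a = 0" "u * f b = 0"
    by linarith+
  then have "a = 0" "b = 0"
    using a b \<open>0 < u\<close> \<open>u < 1\<close> by auto
  with \<open>a \<noteq> b\<close> show False by simp
qed

lemma transverse_commute: "transverse C D \<longleftrightarrow> transverse D C"
  unfolding transverse_def by blast

text \<open>For \<open>z \<noteq> 0\<close> in \<open>\<plusminus>C\<close> and in \<open>\<plusminus>D\<close>: if the two signs agree, \<open>f z\<close> would have
  both signs; if they differ, \<open>g z\<close> would.\<close>
lemma transverse_opposite_sign:
  assumes "linear f" "linear g"
    and "C \<subseteq> pos_cone {f, g}" "D \<subseteq> pos_cone {\<lambda>x. - f x, g}"
  shows "transverse C D"
  unfolding transverse_def
proof
  fix z assume "z \<in> (C \<union> uminus ` C) \<inter> (D \<union> uminus ` D)"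
  then have "z \<in> C \<or> -z \<in> C" "z \<in> D \<or> -z \<in> D"
    by (auto simp: image_iff)
  moreover have C: "x = 0 \<or> 0 < f x \<and> 0 < g x" if "x \<in> C" for x
    using that assms(3) by (auto simp: pos_cone_def)
  moreover have D: "x = 0 \<or> f x < 0 \<and> 0 < g x" if "x \<in> D" for x
    using that assms(4) by (auto simp: pos_cone_def)
  moreover have "f (-z) = - f z" "g (-z) = - g z"
    using assms(1,2) by (simp_all add: linear_neg)
  ultimately have "z = 0"
    by (smt (verit) neg_equal_0_iff_equal)
  then show "z \<in> {0}" by simp
qed

lemma linear_H: "linear H1" "linear H2" "linear H3" "linear H4"
  by (auto intro!: linearI simp: H1_def H2_def H3_def H4_def algebra_simps)

lemma linear_neg_H: "linear (\<lambda>x. - H1 x)" "linear (\<lambda>x. - H2 x)" "linear (\<lambda>x. - H3 x)"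
  by (rule linear_compose_neg, rule linear_H)+

lemma C0_pos_cone:
  "C0_1 = pos_cone {H1, H2, H3, H4}"
  "C0_2 = pos_cone {\<lambda>x. - H1 x, \<lambda>x. - H2 x, H3, H4}"
  "C0_3 = pos_cone {\<lambda>x. - H1 x, H2, \<lambda>x. - H3 x, H4}"
  unfolding C0_1_def C0_2_def C0_3_def pos_cone_def by auto

lemma convex_cone_C0: "convex_cone C0_1" "convex_cone C0_2" "convex_cone C0_3"
  unfolding C0_pos_cone
  by (auto intro!: convex_cone_pos_cone simp: linear_H linear_neg_H)

theorem lemma2:
  fixes m :: "nat^3" and P :: "nat^3 \<Rightarrow> real^3"
  assumes "\<forall>j. m$j \<ge> 2"
    and "convex hull (Dset m P 1) \<subseteq> C0_1"
    and "convex hull (Dset m P 2) \<subseteq> C0_2"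
    and "convex hull (Dset m P 3) \<subseteq> C0_3"
  shows "cotransverse (coni (Dset m P 1)) (coni (Dset m P 2)) (coni (Dset m P 3))"
proof -
  let ?C1 = "coni (Dset m P 1)" and ?C2 = "coni (Dset m P 2)" and ?C3 = "coni (Dset m P 3)"
  have "?C1 \<subseteq> C0_1" "?C2 \<subseteq> C0_2" "?C3 \<subseteq> C0_3"
    using coni_subset_convex_cone[OF convex_cone_C0(1) subset_trans[OF hull_subset assms(2)]]
      coni_subset_convex_cone[OF convex_cone_C0(2) subset_trans[OF hull_subset assms(3)]]
      coni_subset_convex_cone[OF convex_cone_C0(3) subset_trans[OF hull_subset assms(4)]] .
  then have C: "?C1 \<subseteq> pos_cone {H1, H2, H3, H4}"
    "?C2 \<subseteq> pos_cone {\<lambda>x. - H1 x, \<lambda>x. - H2 x, H3, H4}"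
    "?C3 \<subseteq> pos_cone {\<lambda>x. - H1 x, H2, \<lambda>x. - H3 x, H4}"
    unfolding C0_pos_cone .
  have "convex hull (?C1 \<union> ?C2 \<union> ?C3) \<subseteq> pos_cone {H4}"
    using C by (intro convex_hull_Un_subset_pos_cone) (auto simp: linear_H pos_cone_def)
  then have "0 extreme_point_of convex hull (?C1 \<union> ?C2 \<union> ?C3)"
    by (rule extreme_point_zero_pos_cone[OF linear_H(4)]) (simp add: hull_inc zero_in_coni)
  moreover have "transverse ?C1 (convex hull (?C2 \<union> ?C3))"
    using C by (intro transverse_opposite_sign[OF linear_H(1,4)] convex_hull_Un_subset_pos_cone)
      (auto simp: linear_H linear_neg_H pos_cone_def)
  moreover have "transverse (convex hull (?C1 \<union> ?C3)) ?C2"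
    using C by (intro transverse_opposite_sign[OF linear_H(2,4)] convex_hull_Un_subset_pos_cone)
      (auto simp: linear_H pos_cone_def)
  moreover have "transverse (convex hull (?C1 \<union> ?C2)) ?C3"
    using C by (intro transverse_opposite_sign[OF linear_H(3,4)] convex_hull_Un_subset_pos_cone)
      (auto simp: linear_H pos_cone_def)
  ultimately show ?thesis
    unfolding cotransverse_def by (simp add: transverse_commute)
qed

end
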